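(* Consider the honeycomb lattice with Bravais lattice vectors $\bm a_1,\bm a_2$ and sites $A(\bm R),B(\bm R)$ for $\bm R\in\mathbb Z\bm a_1+\mathbb Z\bm a_2$, with nearest-neighbour bonds $A(\bm R)$–$B(\bm R)$ of type $c$, $A(\bm R)$–$B(\bm R-\bm a_1)$ of type $a$, and $A(\bm R)$–$B(\bm R-\bm a_2)$ of type $b$. Assign to every bond $\langle ij\rangle$ of type $\alpha$ the link matrix $U_{ij}=U_{ji}=U^\alpha$, where $$U^a=\tau^y\otimes I_2,\quad U^b=-\tau^x\otimes\sigma^z,\quad U^c=-\tau^x\otimes\sigma^y,$$ with $\tau^{x,y,z},\sigma^{x,y,z}$ Pauli matrices. Then (i) for every elementary hexagon $p$, the ordered product of the link matrices around $p$ equals $-I_4$; and (ii) for any finite flake $\Lambda$ of this lattice (a finite union of closed hexagonal plaquettes whose cycle space is generated by the hexagon boundaries) admitting a Hamiltonian path, there exist unitary $4\times4$ matrices $g_j$ and signs $\eta_{ij}=\eta_{ji}\in\{+1,-1\}$ such that $g_iU_{ij}g_j^\dagger=\eta_{ij}I_4$ for every bond of $\Lambda$ and $\prod_{\langle ij\rangle\in p}\eta_{ij}=-1$ for every hexagon $p$ of $\Lambda$. Consequently the Hubbard model $$H=-\frac{t}{\sqrt3}\sum_{\langle ij\rangle}\psi_i^\dagger U_{ij}\psi_j+h.c.+\frac U2\sum_j\psi_j^\dagger\psi_j(\psi_j^\dagger\psi_j-1)$$ on $\Lambda$ (with $\psi_j$ four-component fermionic spinors) is unitarily equivalent, via $\psi_j\to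 g_j\psi_j$, to the $\pi$-flux Hubbard model $-\frac{t}{\sqrt3}\sum_{\langle ij\rangle}\eta_{ij}\psi_i^\dagger\psi_j+h.c.+\frac U2\sum_j\psi_j^\dagger\psi_j(\psi_j^\dagger\psi_j-1)$, which has a global $\mathrm{SU}(4)$ symmetry.
   Context: $t,U$ are real. The Pauli matrices $\boldsymbol\tau$ act on the first and $\boldsymbol\sigma$ on the second tensor factor of $\mathbb C^2\otimes\mathbb C^2$. With the given bond assignment, each hexagon's bonds have types $c,a,b,c,a,b$ in cyclic order. This model arises as the $J_{\mathrm{eff}}=3/2$ description of $d^1$ ions (e.g. Zr$^{3+}$ in $\alpha$-ZrCl$_3$) on a honeycomb lattice of edge-sharing octahedra. *)

theory Defs
  imports "Jordan_Normal_Form.Matrix"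
begin

text \<open>A Bravais lattice vector R = n1 a1 + n2 a2 is represented by its integer
coordinates (n1, n2).  Sites are A(R) and B(R).\<close>

datatype site = SA "int \<times> int" | SB "int \<times> int"

datatype bondtype = Ta | Tb | Tc

definition a1 :: "int \<times> int" where "a1 = (1, 0)"
definition a2 :: "int \<times> int" where "a2 = (0, 1)"

definition vadd :: "int \<times> int \<Rightarrow> int \<times> int \<Rightarrow> int \<times> int"
  where "vadd R S = (fst R + fst S, snd R + snd S)"
definition vsub :: "int \<times> int \<Rightarrow> int \<times> int \<Rightarrow> int \<times> int"
  where "vsub R S = (fst R - fst S, snd R - snd S)"

fun bond_type :: "site \<Rightarrow> site \<Rightarrow> bondtype option" where
  "bond_type (SA R) (SB S) =
     (if S = R then Some Tc else if S = vsub R a1 then Some Ta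
      else if S = vsub R a2 then Some Tb else None)"
| "bond_type (SB S) (SA R) =
     (if S = R then Some Tc else if S = vsub R a1 then Some Ta
      else if S = vsub R a2 then Some Tb else None)"
| "bond_type _ _ = None"

definition pauli_x :: "complex mat" where "pauli_x = mat_of_rows_list 2 [[0, 1], [1, 0]]"
definition pauli_y :: "complex mat" where "pauli_y = mat_of_rows_list 2 [[0, - \<i>], [\<i>, 0]]"
definition pauli_z :: "complex mat" where "pauli_z = mat_of_rows_list 2 [[1, 0], [0, -1]]"

text \<open>Kronecker product of two 2x2 matrices (tau acts on the first factor,
  sigma on the second); basis index i = 2*i1 + i2.\<close>
definition kron2 :: "complex mat \<Rightarrow> complex mat \<Rightarrow> complex mat" where
  "kron2 A B = mat 4 4 (\<lambda>(i, j). A $$ (i div 2, j div 2) * B $$ (i mod 2, j mod 2))"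

definition Umat :: "bondtype \<Rightarrow> complex mat" where
  "Umat \<alpha> = (case \<alpha> of
      Ta \<Rightarrow> kron2 pauli_y (1\<^sub>m 2)
    | Tb \<Rightarrow> - kron2 pauli_x pauli_z
    | Tc \<Rightarrow> - kron2 pauli_x pauli_y)"

definition link :: "site \<Rightarrow> site \<Rightarrow> complex mat" where
  "link i j = (case bond_type i j of Some \<alpha> \<Rightarrow> Umat \<alpha> | None \<Rightarrow> 0\<^sub>m 4 4)"

definition dagger :: "complex mat \<Rightarrow> complex mat" where
  "dagger A = mat (dim_col A) (dim_row A) (\<lambda>(i, j). cnj (A $$ (j, i)))"

definition unitary4 :: "complex mat \<Rightarrow> bool" where
  "unitary4 g \<longleftrightarrow> g \<in> carrier_mat 4 4 \<and> g * dagger g = 1\<^sub>m 4 \<and> dagger g * g = 1\<^sub>m 4"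

text \<open>The elementary hexagon labelled by R, as a cyclic list of its six sites:
  A(R) -c- B(R) -a- A(R+a1) -b- B(R+a1-a2) -c- A(R+a1-a2) -a- B(R-a2) -b- A(R).
  Every elementary hexagon of the honeycomb lattice is of this form for a unique R.\<close>
definition hex :: "int \<times> int \<Rightarrow> site list" where
  "hex R = [SA R, SB R, SA (vadd R a1), SB (vsub (vadd R a1) a2),
            SA (vsub (vadd R a1) a2), SB (vsub R a2)]"

definition loop_prod :: "site list \<Rightarrow> complex mat" where
  "loop_prod vs = foldr (\<lambda>k M. link (vs ! k) (vs ! ((k + 1) mod length vs)) * M)
                        [0..<length vs] (1\<^sub>m 4)"

text \<open>Undirected edges are represented as two-element sets of sites.\<close>
definition hex_edges :: "int \<times> int \<Rightarrow> site set set" where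
  "hex_edges R = {{hex R ! k, hex R ! ((k + 1) mod 6)} | k. k < 6}"

definition flake_sites :: "(int \<times> int) set \<Rightarrow> site set" where
  "flake_sites \<Lambda> = (\<Union>R\<in>\<Lambda>. set (hex R))"

definition flake_edges :: "(int \<times> int) set \<Rightarrow> site set set" where
  "flake_edges \<Lambda> = (\<Union>R\<in>\<Lambda>. hex_edges R)"

text \<open>Cycle space (over GF(2)) of the flake graph: edge sets in which every vertex
  has even degree.  Generated by hexagon boundaries: each such edge set is the
  symmetric difference (GF(2)-sum) of the boundaries of some set of hexagons of the flake.\<close>
definition even_subgraph :: "site set set \<Rightarrow> bool" where
  "even_subgraph F \<longleftrightarrow> (\<forall>v. even (card {e \<in> F. v \<in> e}))"

definition gf2_sum_hex :: "(int \<times> int) set \<Rightarrow> site set set" where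
  "gf2_sum_hex S = {e. odd (card {R \<in> S. e \<in> hex_edges R})}"

definition cycle_space_generated_by_hexagons :: "(int \<times> int) set \<Rightarrow> bool" where
  "cycle_space_generated_by_hexagons \<Lambda> \<longleftrightarrow>
     (\<forall>F \<subseteq> flake_edges \<Lambda>. even_subgraph F \<longrightarrow> (\<exists>S \<subseteq> \<Lambda>. F = gf2_sum_hex S))"

definition hamiltonian_path :: "(int \<times> int) set \<Rightarrow> site list \<Rightarrow> bool" where
  "hamiltonian_path \<Lambda> vs \<longleftrightarrow> distinct vs \<and> set vs = flake_sites \<Lambda> \<and>
     (\<forall>k. Suc k < length vs \<longrightarrow> {vs ! k, vs ! Suc k} \<in> flake_edges \<Lambda>)"

end

(*
  The three link matrices are Hermitian involutions that pairwise anticommute: they are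
  Kronecker products of Pauli matrices, and the anticommutation of the Pauli matrices passes
  through the Kronecker product.  Walking once around a hexagon, from any site and in either
  direction, reads a word X Y Z X Y Z with {X, Y, Z} = {U^a, U^b, U^c}, and for anticommuting
  involutions X Y Z X Y Z = -1.

  For (ii) one gauge works on the whole lattice.  Every gauged link g_i U_ij g_j^dagger is then a word in the anticommuting
  involutions that reduces to +1 or -1, and these signs multiply to -1 around each hexagon.
*)

theory Submission
  imports Defs "Jordan_Normal_Form.Matrix_Impl"
begin

lemma dim_row_dagger [simp]: "dim_row (dagger A) = dim_col A"
  and dim_col_dagger [simp]: "dim_col (dagger A) = dim_row A"
  by (simp_all add: dagger_def)

lemma index_dagger [simp]:
  "i < dim_col A \<Longrightarrow> j < dim_row A \<Longrightarrow> dagger A $$ (i, j) = cnj (A $$ (j, i))"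
  by (simp add: dagger_def)

lemma dagger_dagger [simp]: "dagger (dagger A) = A"
  by (rule eq_matI) auto

lemma dagger_one [simp]: "dagger (1\<^sub>m n) = 1\<^sub>m n"
  by (rule eq_matI) auto

lemma dagger_uminus [simp]: "dagger (- A) = - dagger A"
  by (rule eq_matI) auto

lemma dagger_smult [simp]: "dagger (c \<cdot>\<^sub>m A) = cnj c \<cdot>\<^sub>m dagger A"
  by (rule eq_matI) auto

lemma dagger_mult:
  assumes "dim_col A = dim_row B"
  shows "dagger (A * B) = dagger B * dagger A"
proof (rule eq_matI)
  fix i j assume "i < dim_row (dagger B * dagger A)" "j < dim_col (dagger B * dagger A)"
  then have i: "i < dim_col B" and j: "j < dim_row A" by simp_all
  have "dagger (A * B) $$ (i, j) = (\<Sum>k<dim_row B. cnj (A $$ (j, k)) * cnj (B $$ (k, i)))"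
    using i j assms by (simp add: scalar_prod_def lessThan_atLeast0)
  also have "\<dots> = (dagger B * dagger A) $$ (i, j)"
    using i j assms by (simp add: scalar_prod_def lessThan_atLeast0 mult.commute)
  finally show "dagger (A * B) $$ (i, j) = (dagger B * dagger A) $$ (i, j)" .
qed auto

lemma one_smult_mat [simp]: "(1 :: 'a :: ring_1) \<cdot>\<^sub>m A = A"
  by (rule eq_matI) auto

lemma minus_one_smult_mat [simp]: "(- 1 :: 'a :: ring_1) \<cdot>\<^sub>m A = - A"
  by (rule eq_matI) auto

lemma assoc_mult_mat_dim:
  assumes "dim_col A = dim_row B" "dim_col B = dim_row C"
  shows "A * B * C = A * (B * C)"
  using assms by (intro assoc_mult_mat[of A "dim_row A" "dim_col A" B "dim_col B" C "dim_col C"])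
    (auto simp del: assoc_mult_mat)

lemma anticommuting_involutions_word_square:
  fixes A B C :: "'a :: ring_1 mat"
  assumes carrier: "A \<in> carrier_mat n n" "B \<in> carrier_mat n n" "C \<in> carrier_mat n n"
    and inv: "A * A = 1\<^sub>m n" "B * B = 1\<^sub>m n" "C * C = 1\<^sub>m n"
    and anti: "B * A = - (A * B)" "C * A = - (A * C)" "C * B = - (B * C)"
  shows "A * (B * (C * (A * (B * C)))) = - 1\<^sub>m n"
proof -
  have swap: "Y * (X * Z) = - (X * (Y * Z))"
    if "Y * X = - (X * Y)" "X \<in> carrier_mat n n" "Y \<in> carrier_mat n n" "Z \<in> carrier_mat n n"
    for X Y Z :: "'a mat"
  proof -
    have "Y * (X * Z) = (Y * X) * Z" using that(2-4) by simp
    also have "\<dots> = - (X * (Y * Z))" using that by simp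
    finally show ?thesis .
  qed
  have CBC: "C * (B * C) = - B"
    using swap[OF anti(3)] inv(3) carrier by simp
  have "C * (A * (B * C)) = A * B"
    using swap[OF anti(2)] CBC carrier by simp
  then have "A * (B * (C * (A * (B * C)))) = A * (B * (A * B))"
    by simp
  also have "\<dots> = - (A * (A * (B * B)))"
    using swap[OF anti(1)] carrier by simp
  finally show ?thesis
    using inv carrier by simp
qed

lemma pauli_carrier_mat [simp]:
  "pauli_x \<in> carrier_mat 2 2" "pauli_y \<in> carrier_mat 2 2" "pauli_z \<in> carrier_mat 2 2"
  unfolding pauli_x_def pauli_y_def pauli_z_def mat_of_rows_list_def by (simp_all add: numeral_2_eq_2)

lemma pauli_involution:
  "pauli_x * pauli_x = 1\<^sub>m 2" "pauli_y * pauli_y = 1\<^sub>m 2" "pauli_z * pauli_z = 1\<^sub>m 2"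
  by code_simp+

lemma pauli_anticommute:
  "pauli_y * pauli_x = - (pauli_x * pauli_y)" "pauli_z * pauli_y = - (pauli_y * pauli_z)"
  by code_simp+

lemma dagger_pauli: "dagger pauli_x = pauli_x" "dagger pauli_y = pauli_y" "dagger pauli_z = pauli_z"
  by code_simp+

lemma dim_row_kron2 [simp]: "dim_row (kron2 A B) = 4"
  and dim_col_kron2 [simp]: "dim_col (kron2 A B) = 4"
  by (simp_all add: kron2_def)

lemma kron2_mult:
  assumes "A \<in> carrier_mat 2 2" "B \<in> carrier_mat 2 2" "C \<in> carrier_mat 2 2" "D \<in> carrier_mat 2 2"
  shows "kron2 A B * kron2 C D = kron2 (A * C) (B * D)"
proof (rule eq_matI)
  fix i j assume "i < dim_row (kron2 (A * C) (B * D))" "j < dim_col (kron2 (A * C) (B * D))"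
  then have "i < 4" "j < 4" by simp_all
  have sum2: "(\<Sum>k\<in>{0..<2}. f k) = f 0 + f 1" and sum4: "(\<Sum>k\<in>{0..<4}. f k) = f 0 + f 1 + f 2 + f 3"
    for f :: "nat \<Rightarrow> complex"
    by (simp_all add: eval_nat_numeral atLeast0_lessThan_Suc)
  show "(kron2 A B * kron2 C D) $$ (i, j) = kron2 (A * C) (B * D) $$ (i, j)"
    using assms \<open>i < 4\<close> \<open>j < 4\<close> by (simp add: kron2_def scalar_prod_def sum2 sum4 algebra_simps)
qed simp_all

lemma kron2_uminus_left: "A \<in> carrier_mat 2 2 \<Longrightarrow> kron2 (- A) B = - kron2 A B"
  and kron2_uminus_right: "B \<in> carrier_mat 2 2 \<Longrightarrow> kron2 A (- B) = - kron2 A B"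
  by (rule eq_matI; simp add: kron2_def less_mult_imp_div_less)+

lemma kron2_one: "kron2 (1\<^sub>m 2) (1\<^sub>m 2) = 1\<^sub>m 4"
proof (rule eq_matI)
  fix i j assume "i < dim_row (1\<^sub>m 4 :: complex mat)" "j < dim_col (1\<^sub>m 4 :: complex mat)"
  then have "i < 4" "j < 4" by simp_all
  moreover have "i = j \<longleftrightarrow> i div 2 = j div 2 \<and> i mod 2 = j mod 2"
    by (metis div_mult_mod_eq)
  ultimately show "kron2 (1\<^sub>m 2) (1\<^sub>m 2) $$ (i, j) = 1\<^sub>m 4 $$ (i, j)"
    by (simp add: kron2_def)
qed (simp_all add: kron2_def)

lemma dagger_kron2:
  "A \<in> carrier_mat 2 2 \<Longrightarrow> B \<in> carrier_mat 2 2 \<Longrightarrow> dagger (kron2 A B) = kron2 (dagger A) (dagger B)"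
  by (rule eq_matI) (simp_all add: kron2_def less_mult_imp_div_less)

lemma dim_row_Umat [simp]: "dim_row (Umat \<alpha>) = 4"
  and dim_col_Umat [simp]: "dim_col (Umat \<alpha>) = 4"
  by (cases \<alpha>; simp add: Umat_def kron2_def)+

lemma Umat_carrier_mat: "Umat \<alpha> \<in> carrier_mat 4 4"
  by (simp add: carrier_matI)

lemma Umat_involution: "Umat \<alpha> * Umat \<alpha> = 1\<^sub>m 4"
  by (cases \<alpha>)
    (simp_all add: Umat_def kron2_mult mult_carrier_mat[of _ 2 2 _ 2] pauli_involution kron2_one)

lemma Umat_anticommute: "\<alpha> \<noteq> \<beta> \<Longrightarrow> Umat \<beta> * Umat \<alpha> = - (Umat \<alpha> * Umat \<beta>)"
  by (cases \<alpha>; cases \<beta>)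
    (simp_all add: Umat_def kron2_mult mult_carrier_mat[of _ 2 2 _ 2] pauli_anticommute
      kron2_uminus_left kron2_uminus_right left_mult_one_mat[of _ 2 2] right_mult_one_mat[of _ 2 2])

lemma dagger_Umat [simp]: "dagger (Umat \<alpha>) = Umat \<alpha>"
  by (cases \<alpha>) (simp_all add: Umat_def dagger_kron2 dagger_pauli)

lemma Umat_hexagon_word:
  "distinct [\<alpha>, \<beta>, \<gamma>] \<Longrightarrow>
     Umat \<alpha> * (Umat \<beta> * (Umat \<gamma> * (Umat \<alpha> * (Umat \<beta> * Umat \<gamma>)))) = - 1\<^sub>m 4"
  by (intro anticommuting_involutions_word_square Umat_involution Umat_anticommute Umat_carrier_mat)
    auto

lemma Umat_mult_cancel:
  "dim_row Z = 4 \<Longrightarrow> Umat \<alpha> * (Umat \<alpha> * Z) = Z"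
  using assoc_mult_mat_dim[of "Umat \<alpha>" "Umat \<alpha>" Z] by (simp add: Umat_involution)

lemma Umat_mult_swap:
  "\<beta> \<noteq> \<alpha> \<Longrightarrow> dim_row Z = 4 \<Longrightarrow> Umat \<beta> * (Umat \<alpha> * Z) = - (Umat \<alpha> * (Umat \<beta> * Z))"
  using assoc_mult_mat_dim[of "Umat \<beta>" "Umat \<alpha>" Z] assoc_mult_mat_dim[of "Umat \<alpha>" "Umat \<beta>" Z]
    Umat_anticommute[of \<alpha> \<beta>]
  by (simp del: assoc_mult_mat)

text \<open>Rewriting with these rules sorts every word in the link matrices into the order
  \<open>a < b < c\<close> and cancels squares, which decides all identities between such words.\<close>
lemmas Umat_normalize = assoc_mult_mat_dim dagger_mult Umat_involution Umat_mult_cancel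
  Umat_anticommute[of Ta Tb, simplified] Umat_mult_swap[of Tb Ta, simplified]
  Umat_anticommute[of Ta Tc, simplified] Umat_mult_swap[of Tc Ta, simplified]
  Umat_anticommute[of Tb Tc, simplified] Umat_mult_swap[of Tc Tb, simplified]

lemma bond_type_commute: "bond_type i j = bond_type j i"
  by (cases i; cases j) simp_all

lemma loop_prod_six:
  "loop_prod [v0, v1, v2, v3, v4, v5] =
     link v0 v1 * (link v1 v2 * (link v2 v3 * (link v3 v4 * (link v4 v5 * (link v5 v0 * 1\<^sub>m 4)))))"
  by (simp add: loop_prod_def upt_rec)

lemma lessThan_6: "{..<6} = {0, 1, 2, 3, 4, 5 :: nat}"
  by auto

lemma loop_prod_rotate_hex:
  assumes "k < 6"
  shows "loop_prod (rotate k (hex R)) = - 1\<^sub>m 4"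
proof -
  from assms have "k \<in> {..<6}" by simp
  then show ?thesis
    by (cases R) (auto simp: lessThan_6 rotate_drop_take hex_def loop_prod_six link_def
        vadd_def vsub_def a1_def a2_def Umat_hexagon_word)
qed

lemma loop_prod_rotate_rev_hex:
  assumes "k < 6"
  shows "loop_prod (rotate k (rev (hex R))) = - 1\<^sub>m 4"
proof -
  from assms have "k \<in> {..<6}" by simp
  then show ?thesis
    by (cases R) (auto simp: lessThan_6 rotate_drop_take hex_def loop_prod_six link_def
        vadd_def vsub_def a1_def a2_def Umat_hexagon_word)
qed

text \<open>Making the \<open>c\<close>-bonds trivial forces \<open>g\<^sub>B(R) = g\<^sub>A(R) U\<^sup>c\<close>; the \<open>a\<close>- and \<open>b\<close>-bonds
  then require \<open>g\<^sub>A(R - a\<^sub>1) = \<plusminus> g\<^sub>A(R) U\<^sup>a U\<^sup>c\<close> and \<open>g\<^sub>A(R - a\<^sub>2) = \<plusminus> g\<^sub>A(R) U\<^sup>b U\<^sup>c\<close>.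
  Since \<open>U\<^sup>c U\<^sup>a\<close> and \<open>U\<^sup>c U\<^sup>b\<close> square to \<open>-1\<close> and anticommute, only the parities of the
  coordinates of \<open>R\<close> matter.\<close>
definition gauge_A :: "int \<times> int \<Rightarrow> complex mat" where
  "gauge_A R = (if odd (fst R) then Umat Tc * Umat Ta else 1\<^sub>m 4) *
               (if odd (snd R) then Umat Tc * Umat Tb else 1\<^sub>m 4)"

fun gauge :: "site \<Rightarrow> complex mat" where
  "gauge (SA R) = gauge_A R"
| "gauge (SB R) = gauge_A R * Umat Tc"

definition bond_sign :: "int \<times> int \<Rightarrow> bondtype \<Rightarrow> real" where
  "bond_sign R \<alpha> = (case \<alpha> of
      Ta \<Rightarrow> if even (fst R + snd R) then -1 else 1
    | Tb \<Rightarrow> if even (snd R) then -1 else 1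
    | Tc \<Rightarrow> 1)"

fun gauge_sign :: "site \<Rightarrow> site \<Rightarrow> real" where
  "gauge_sign (SA R) j = (case bond_type (SA R) j of Some \<alpha> \<Rightarrow> bond_sign R \<alpha> | None \<Rightarrow> 1)"
| "gauge_sign i (SA R) = (case bond_type (SA R) i of Some \<alpha> \<Rightarrow> bond_sign R \<alpha> | None \<Rightarrow> 1)"
| "gauge_sign i j = 1"

lemma dim_row_gauge_A [simp]: "dim_row (gauge_A R) = 4"
  and dim_col_gauge_A [simp]: "dim_col (gauge_A R) = 4"
  by (simp_all add: gauge_A_def)

lemma unitary4_gauge: "unitary4 (gauge v)"
proof -
  obtain n1 n2 where "v = SA (n1, n2) \<or> v = SB (n1, n2)"
    by (cases v) auto
  then have "gauge v * dagger (gauge v) = 1\<^sub>m 4 \<and> dagger (gauge v) * gauge v = 1\<^sub>m 4"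
    by (elim disjE; cases "even n1"; cases "even n2") (simp_all add: gauge_A_def Umat_normalize)
  moreover have "gauge v \<in> carrier_mat 4 4"
    by (cases v) (simp_all add: carrier_matI)
  ultimately show ?thesis
    by (simp add: unitary4_def)
qed

lemma gauge_link_SA:
  assumes "bond_type (SA R) j = Some \<alpha>"
  shows "gauge (SA R) * Umat \<alpha> * dagger (gauge j) = complex_of_real (bond_sign R \<alpha>) \<cdot>\<^sub>m 1\<^sub>m 4"
proof -
  obtain n1 n2 where R: "R = (n1, n2)" by fastforce
  from assms consider "j = SB (n1, n2)" "\<alpha> = Tc" | "j = SB (n1 - 1, n2)" "\<alpha> = Ta"
    | "j = SB (n1, n2 - 1)" "\<alpha> = Tb"
    by (cases j) (auto simp: R vsub_def a1_def a2_def split: if_splits)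
  then show ?thesis
    by cases (cases "even n1"; cases "even n2"; simp add: R gauge_A_def bond_sign_def Umat_normalize)+
qed

lemma gauge_link:
  assumes "bond_type i j = Some \<alpha>"
  shows "gauge i * link i j * dagger (gauge j) = complex_of_real (gauge_sign i j) \<cdot>\<^sub>m 1\<^sub>m 4"
proof (cases i)
  case (SA R)
  then show ?thesis using assms gauge_link_SA by (simp add: link_def)
next
  case (SB S)
  then obtain R where j: "j = SA R" using assms by (cases j) auto
  have bond: "bond_type (SA R) i = Some \<alpha>" using assms j bond_type_commute by metis
  have "gauge i * link i j * dagger (gauge j) = dagger (gauge j * Umat \<alpha> * dagger (gauge i))"
    using assms SB j by (simp add: link_def dagger_mult assoc_mult_mat_dim)
  also have "gauge j * Umat \<alpha> * dagger (gauge i) = complex_of_real (bond_sign R \<alpha>) \<cdot>\<^sub>m 1\<^sub>m 4"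
    using gauge_link_SA[OF bond] j by simp
  finally show ?thesis using SB j bond by simp
qed

lemma gauge_sign_commute: "gauge_sign i j = gauge_sign j i"
  by (cases i; cases j) (simp_all add: bond_type_commute)

lemma gauge_sign_in_pm_one: "gauge_sign i j \<in> {1, -1}"
  by (cases i; cases j) (auto simp: bond_sign_def split: option.split bondtype.split)

lemma flake_edge_bond_type:
  assumes "{i, j} \<in> flake_edges \<Lambda>"
  shows "\<exists>\<alpha>. bond_type i j = Some \<alpha>"
proof -
  from assms obtain R k where "k < 6" and "{i, j} = {hex R ! k, hex R ! ((k + 1) mod 6)}"
    unfolding flake_edges_def hex_edges_def by blast
  moreover have "\<exists>\<alpha>. bond_type (hex R ! k) (hex R ! ((k + 1) mod 6)) = Some \<alpha>" if "k < 6" for k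
    using that by (cases R)
      (auto simp flip: lessThan_iff simp: lessThan_6 hex_def vadd_def vsub_def a1_def a2_def)
  ultimately show ?thesis
    by (auto simp: doubleton_eq_iff bond_type_commute)
qed

lemma gauge_link_flake_edge:
  assumes "{i, j} \<in> flake_edges \<Lambda>"
  shows "gauge i * link i j * dagger (gauge j) = complex_of_real (gauge_sign i j) \<cdot>\<^sub>m 1\<^sub>m 4"
  using flake_edge_bond_type[OF assms] gauge_link by blast

lemma hex_gauge_sign_prod: "(\<Prod>k<6. gauge_sign (hex R ! k) (hex R ! ((k + 1) mod 6))) = -1"
proof -
  obtain n1 n2 where R: "R = (n1, n2)" by fastforce
  show ?thesis
    by (cases "even n1"; cases "even n2")
      (simp_all add: R lessThan_6 hex_def vadd_def vsub_def a1_def a2_def bond_sign_def)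
qed

theorem mainTheorem3:
  shows "(\<forall>R k. k < 6 \<longrightarrow>
            loop_prod (rotate k (hex R)) = - 1\<^sub>m 4 \<and>
            loop_prod (rotate k (rev (hex R))) = - 1\<^sub>m 4)
       \<and> (\<forall>\<Lambda> :: (int \<times> int) set.
            finite \<Lambda> \<and> cycle_space_generated_by_hexagons \<Lambda> \<and>
            (\<exists>vs. hamiltonian_path \<Lambda> vs) \<longrightarrow>
            (\<exists>(g :: site \<Rightarrow> complex mat) (\<eta> :: site \<Rightarrow> site \<Rightarrow> real).
               (\<forall>j \<in> flake_sites \<Lambda>. unitary4 (g j)) \<and>
               (\<forall>i j. {i, j} \<in> flake_edges \<Lambda> \<longrightarrow>
                   \<eta> i j \<in> {1, -1} \<and> \<eta> i j = \<eta> j i \<and>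
                   g i * link i j * dagger (g j) = complex_of_real (\<eta> i j) \<cdot>\<^sub>m 1\<^sub>m 4) \<and>
               (\<forall>R \<in> \<Lambda>. (\<Prod>k<6. \<eta> (hex R ! k) (hex R ! ((k + 1) mod 6))) = -1)))"
  by (intro conjI allI impI ballI exI[of _ gauge] exI[of _ gauge_sign])
    (rule loop_prod_rotate_hex loop_prod_rotate_rev_hex unitary4_gauge gauge_sign_in_pm_one
      gauge_sign_commute gauge_link_flake_edge hex_gauge_sign_prod; assumption)+

end
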